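(* Let $X$ be a vertex-weighted simplicial complex on $n$ vertices, fix $k$, and let $U^{up}$ be a $\Pi^\pm_k$-projected $(1,\alpha,0)$-unitary encoding of $\Pi^\pm_kP^{up}\Pi^\pm_k$, i.e. $(\Pi^\pm_k\otimes\langle0^\alpha|)U^{up}(\Pi^\pm_k\otimes|0^\alpha\rangle)=\Pi^\pm_kP^{up}\Pi^\pm_k$. Let $V^{up}=((I_n\otimes HZ\otimes I)\otimes I_\alpha)U^{up}$, where $HZ$ (the product of the Hadamard and Pauli-$Z$ matrices) acts on qubit $n+1$. Then $(\Pi_k\otimes\langle0^\alpha|)V^{up}(\Pi_k\otimes|0^\alpha\rangle)=\frac{\Delta^{up}_k}{K^{up}\sqrt2}$.
   Context: Vertices $V=\{1,\dots,n\}$ with weights $w:V\to(0,\infty)$. $X$ is a family of nonempty subsets of $V$ closed under nonempty subsets; $X_k$ = $k$-simplices (size $k+1$), identified with Hamming-weight-$(k+1)$ strings $x_\sigma\in\{0,1\}^n$. Oriented $k$-simplex: ordering $[v_0,\dots,v_k]$ up to even permutations, positive if an even permutation of the increasing order. $X^\pm_k=X^+_k\cup X^-_k$, $\overline\sigma$ opposite orientation, $\sigma_+$ the positive one of $\sigma,\overline\sigma$. $[v_0,\dots,v_k]$ induces on a coface $\sigma\cup\{u\}$ the orientation $[u,v_0,\dots,v_k]$. For oriented $\sigma,\sigma'$ with distinct underlying simplices, $\sigma\sim_\uparrow\sigma'$ if their union is a $(k+1)$-simplex of $X$ on which they induce the same orientation; $v_\sigma$ ($v_{\sigma'}$) is the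 vertex of $\sigma$ not in $\sigma'$ (vice versa); $\mathrm{up}(\sigma)=\{u:\sigma\cup\{u\}\in X_{k+1}\}$. $\Delta^{up}_k$ is the matrix indexed by $X^+_k$ with $(\Delta^{up}_k)_{\sigma\sigma}=\sum_{u\in\mathrm{up}(\sigma)}w(u)^2$, $(\Delta^{up}_k)_{\sigma\sigma'}=w(v_\sigma)w(v_{\sigma'})$ if $\sigma\sim_\uparrow\sigma'$, $-w(v_\sigma)w(v_{\sigma'})$ if $\sigma\sim_\uparrow\overline{\sigma'}$, $0$ otherwise. $\Theta$ is an absorbing state, $S_k=X^\pm_k\cup\{\Theta\}$; $|\sigma\rangle$ is the $(n+2)$-qubit basis state $|x_\sigma\rangle|00\rangle$ ($\sigma\in X^+_k$), $|x_\sigma\rangle|10\rangle$ ($\sigma\in X^-_k$), $|0^n\rangle|01\rangle$ ($\Theta$). $\Pi_k$, $\Pi^\pm_k$ project onto $\mathrm{span}\{|\sigma\rangle\}$ over $X^+_k$, $X^\pm_k$; matrices indexed by $X^+_k$ or $S_k$ act on these spans in this basis and as $0$ elsewhere. A unitary $U$ is a $\Pi_s$-projected $(a,\alpha,\epsilon)$-unitary encoding of $A$ if $\|A-a(\Pi_s\otimes\langle0^\alpha|)U(\Pi_s\otimes|0^\alpha\rangle)\|\le\epsilon$. For $\sigma\in X^\pm_k$: $i(\sigma)$ = position of the $i$-th $0$ of $x_\sigma$, $\tilde j(\tau)$ = position of the $j$-th $1$ of $x_\tau$; $\sigma^\uparrow(i)=\sigma\cup\{i(\sigma)\}$. $K^{up}=\max_{\sigma\in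 X^\pm_k}\sum_{i\in[n-k-1],j\in[k+2]}w(i(\sigma))w(\tilde j(\sigma^\uparrow(i)))$; $\eta^{up}_\sigma=1-\frac1{K^{up}}\sum_{\sigma'\in X^+_k}|(\Delta^{up}_k)_{\sigma'\sigma_+}|$. $P^{up}$ on $S_k$: for $\sigma,\sigma'\in X^\pm_k$, $P^{up}_{\sigma\sigma}=\sum_{u\in\mathrm{up}(\sigma)}w(u)^2/K^{up}$, $P^{up}_{\sigma\sigma'}=w(v_\sigma)w(v_{\sigma'})/K^{up}$ if $\sigma\sim_\uparrow\sigma'$, $P^{up}_{\sigma\Theta}=\eta^{up}_\sigma$, $P^{up}_{\Theta\Theta}=1$, all other entries $0$. *)

theory Defs
  imports Complex_Main "HOL-Combinatorics.Permutations"
begin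

definition simplicial_complex :: "nat \<Rightarrow> nat set set \<Rightarrow> bool" where
  "simplicial_complex n X \<longleftrightarrow>
     (\<forall>S\<in>X. S \<noteq> {} \<and> S \<subseteq> {1..n}) \<and> (\<forall>S\<in>X. \<forall>T. T \<subseteq> S \<and> T \<noteq> {} \<longrightarrow> T \<in> X)"

definition ordering_pos :: "nat list \<Rightarrow> bool" where
  "ordering_pos vs \<longleftrightarrow> (\<exists>p. p permutes {..<length vs} \<and> evenperm p \<and>
      vs = map (\<lambda>i. sorted_list_of_set (set vs) ! p i) [0..<length vs])"

text \<open>Oriented simplex: pair (underlying simplex, sign), sign True = positive orientation.\<close>
type_synonym osimplex = "nat set \<times> bool"

definition Xk :: "nat set set \<Rightarrow> nat \<Rightarrow> nat set set" where
  "Xk X k = {S \<in> X. card S = k + 1}"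

definition Xpm :: "nat set set \<Rightarrow> nat \<Rightarrow> osimplex set" where
  "Xpm X k = {(S, s). S \<in> Xk X k}"

definition Xplus :: "nat set set \<Rightarrow> nat \<Rightarrow> osimplex set" where
  "Xplus X k = {(S, s). S \<in> Xk X k \<and> s}"

definition Xminus :: "nat set set \<Rightarrow> nat \<Rightarrow> osimplex set" where
  "Xminus X k = {(S, s). S \<in> Xk X k \<and> \<not> s}"

definition opp :: "osimplex \<Rightarrow> osimplex" where
  "opp \<sigma> = (fst \<sigma>, \<not> snd \<sigma>)"

definition pos_of :: "osimplex \<Rightarrow> osimplex" where
  "pos_of \<sigma> = (fst \<sigma>, True)"

text \<open>Orientation induced on the coface \<sigma> \<union> {u}: [v0..vk] induces [u,v0,..,vk].
Using the increasing ordering as representative of the positive orientation.\<close>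
definition induced :: "osimplex \<Rightarrow> nat \<Rightarrow> osimplex" where
  "induced \<sigma> u = (insert u (fst \<sigma>),
      (ordering_pos (u # sorted_list_of_set (fst \<sigma>)) \<longleftrightarrow> snd \<sigma>))"

definition vdiff :: "osimplex \<Rightarrow> osimplex \<Rightarrow> nat" where
  "vdiff \<sigma> \<sigma>' = the_elem (fst \<sigma> - fst \<sigma>')"

definition sim_up :: "nat set set \<Rightarrow> osimplex \<Rightarrow> osimplex \<Rightarrow> bool" where
  "sim_up X \<sigma> \<sigma>' \<longleftrightarrow> fst \<sigma> \<noteq> fst \<sigma>' \<and> fst \<sigma> \<union> fst \<sigma>' \<in> X \<and>
      card (fst \<sigma> \<union> fst \<sigma>') = card (fst \<sigma>) + 1 \<and>
      card (fst \<sigma> \<union> fst \<sigma>') = card (fst \<sigma>') + 1 \<and>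
      induced \<sigma> (vdiff \<sigma>' \<sigma>) = induced \<sigma>' (vdiff \<sigma> \<sigma>')"

definition up :: "nat set set \<Rightarrow> nat set \<Rightarrow> nat set" where
  "up X S = {u. u \<notin> S \<and> insert u S \<in> X}"

definition Delta_up :: "nat set set \<Rightarrow> (nat \<Rightarrow> real) \<Rightarrow> osimplex \<Rightarrow> osimplex \<Rightarrow> real" where
  "Delta_up X w \<sigma> \<sigma>' =
     (if \<sigma> = \<sigma>' then (\<Sum>u\<in>up X (fst \<sigma>). (w u)\<^sup>2)
      else if sim_up X \<sigma> \<sigma>' then w (vdiff \<sigma> \<sigma>') * w (vdiff \<sigma>' \<sigma>)
      else if sim_up X \<sigma> (opp \<sigma>') then - (w (vdiff \<sigma> \<sigma>') * w (vdiff \<sigma>' \<sigma>))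
      else 0)"

text \<open>i(\<sigma>): position of the i-th 0 of x_\<sigma>; j~(\<tau>): position of the j-th 1 of x_\<tau> (1-indexed).\<close>
definition ith_zero :: "nat \<Rightarrow> nat set \<Rightarrow> nat \<Rightarrow> nat" where
  "ith_zero n S i = sorted_list_of_set ({1..n} - S) ! (i - 1)"

definition jth_one :: "nat set \<Rightarrow> nat \<Rightarrow> nat" where
  "jth_one T j = sorted_list_of_set T ! (j - 1)"

definition K_up :: "nat \<Rightarrow> nat set set \<Rightarrow> (nat \<Rightarrow> real) \<Rightarrow> nat \<Rightarrow> real" where
  "K_up n X w k = Max ((\<lambda>\<sigma>. \<Sum>i\<in>{1..n-k-1}. \<Sum>j\<in>{1..k+2}.
        w (ith_zero n (fst \<sigma>) i) * w (jth_one (insert (ith_zero n (fst \<sigma>) i) (fst \<sigma>)) j))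
      ` Xpm X k)"

definition eta_up :: "nat \<Rightarrow> nat set set \<Rightarrow> (nat \<Rightarrow> real) \<Rightarrow> nat \<Rightarrow> osimplex \<Rightarrow> real" where
  "eta_up n X w k \<sigma> = 1 - (\<Sum>\<sigma>'\<in>Xplus X k. \<bar>Delta_up X w \<sigma>' (pos_of \<sigma>)\<bar>) / K_up n X w k"

text \<open>States of S_k: Some \<sigma> for oriented simplices, None for the absorbing state \<Theta>.\<close>
definition P_up :: "nat \<Rightarrow> nat set set \<Rightarrow> (nat \<Rightarrow> real) \<Rightarrow> nat \<Rightarrow> osimplex option \<Rightarrow> osimplex option \<Rightarrow> real" where
  "P_up n X w k a b = (case (a, b) of
      (Some \<sigma>, Some \<sigma>') \<Rightarrow>
         (if \<sigma> = \<sigma>' then (\<Sum>u\<in>up X (fst \<sigma>). (w u)\<^sup>2) / K_up n X w k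
          else if sim_up X \<sigma> \<sigma>' then w (vdiff \<sigma> \<sigma>') * w (vdiff \<sigma>' \<sigma>) / K_up n X w k
          else 0)
    | (Some \<sigma>, None) \<Rightarrow> eta_up n X w k \<sigma>
    | (None, None) \<Rightarrow> 1
    | (None, Some _) \<Rightarrow> 0)"

definition Sk :: "nat set set \<Rightarrow> nat \<Rightarrow> osimplex option set" where
  "Sk X k = Some ` Xpm X k \<union> {None}"

text \<open>A computational basis state of m qubits is a bool list of length m (True = 1);
qubit number j (1-indexed) is the list entry j-1. An operator on m qubits is given by
its matrix entries A x y = <x|A|y> for x, y of length m.\<close>

type_synonym qop = "bool list \<Rightarrow> bool list \<Rightarrow> complex"

definition basis :: "nat \<Rightarrow> bool list set" where
  "basis m = {x. length x = m}"

definition op_mult :: "nat \<Rightarrow> qop \<Rightarrow> qop \<Rightarrow> qop" where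
  "op_mult m A B x y = (\<Sum>z\<in>basis m. A x z * B z y)"

definition op_id :: qop where
  "op_id x y = (if x = y then 1 else 0)"

definition op_adj :: "qop \<Rightarrow> qop" where
  "op_adj A x y = cnj (A y x)"

definition op_eq :: "nat \<Rightarrow> qop \<Rightarrow> qop \<Rightarrow> bool" where
  "op_eq m A B \<longleftrightarrow> (\<forall>x\<in>basis m. \<forall>y\<in>basis m. A x y = B x y)"

definition unitary_op :: "nat \<Rightarrow> qop \<Rightarrow> bool" where
  "unitary_op m U \<longleftrightarrow> op_eq m (op_mult m (op_adj U) U) op_id \<and> op_eq m (op_mult m U (op_adj U)) op_id"

definition proj_op :: "bool list set \<Rightarrow> qop" where
  "proj_op B x y = (if x = y \<and> x \<in> B then 1 else 0)"

definition mat_op :: "('i \<Rightarrow> bool list) \<Rightarrow> 'i set \<Rightarrow> ('i \<Rightarrow> 'i \<Rightarrow> complex) \<Rightarrow> qop" where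
  "mat_op bas I M x y = (\<Sum>s\<in>I. \<Sum>t\<in>I. if bas s = x \<and> bas t = y then M s t else 0)"

text \<open>(\<Pi> \<otimes> <0^\<alpha>|) U (\<Pi> \<otimes> |0^\<alpha>>) as an operator on the first m qubits (ancilla last).\<close>
definition proj_block :: "nat \<Rightarrow> bool list set \<Rightarrow> nat \<Rightarrow> qop \<Rightarrow> qop" where
  "proj_block m B \<alpha> U =
     op_mult m (proj_op B) (op_mult m (\<lambda>x y. U (x @ replicate \<alpha> False) (y @ replicate \<alpha> False)) (proj_op B))"

definition gate_on :: "nat \<Rightarrow> nat \<Rightarrow> (bool \<Rightarrow> bool \<Rightarrow> complex) \<Rightarrow> qop" where
  "gate_on m j G x y = G (x ! (j - 1)) (y ! (j - 1)) *
      (if \<forall>i<m. i \<noteq> j - 1 \<longrightarrow> x ! i = y ! i then 1 else 0)"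

definition hadamard :: "bool \<Rightarrow> bool \<Rightarrow> complex" where
  "hadamard a b = (if a \<and> b then -1 else 1) / complex_of_real (sqrt 2)"

definition pauliZ :: "bool \<Rightarrow> bool \<Rightarrow> complex" where
  "pauliZ a b = (if a = b then (if a then -1 else 1) else 0)"

definition HZ :: "bool \<Rightarrow> bool \<Rightarrow> complex" where
  "HZ a b = (\<Sum>c\<in>UNIV. hadamard a c * pauliZ c b)"

definition xstr :: "nat \<Rightarrow> nat set \<Rightarrow> bool list" where
  "xstr n S = map (\<lambda>v. v \<in> S) [1..<n+1]"

text \<open>|\<sigma>> = |x_\<sigma>>|00> for positive, |x_\<sigma>>|10> for negative orientation; \<Theta> = |0^n>|01>.\<close>
definition ket :: "nat \<Rightarrow> osimplex \<Rightarrow> bool list" where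
  "ket n \<sigma> = xstr n (fst \<sigma>) @ [\<not> snd \<sigma>, False]"

definition ket_S :: "nat \<Rightarrow> osimplex option \<Rightarrow> bool list" where
  "ket_S n a = (case a of Some \<sigma> \<Rightarrow> ket n \<sigma> | None \<Rightarrow> replicate n False @ [False, True])"

definition Pi_k :: "nat \<Rightarrow> nat set set \<Rightarrow> nat \<Rightarrow> bool list set" where
  "Pi_k n X k = ket n ` Xplus X k"

definition Pi_pm :: "nat \<Rightarrow> nat set set \<Rightarrow> nat \<Rightarrow> bool list set" where
  "Pi_pm n X k = ket n ` Xpm X k"

end

theory Submission
  imports Defs
begin

text \<open>On a positively oriented \<sigma> the orientation qubit n+1 of |\<sigma>\<rangle> is 0, the row \<langle>0| of
HZ is (\<langle>0| - \<langle>1|)/\<surd>2, and flipping that qubit turns |\<sigma>\<rangle> into |opp \<sigma>\<rangle>. Hence the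
(\<sigma>, \<sigma>') entry of the projected V is (P(\<sigma>, \<sigma>') - P(opp \<sigma>, \<sigma>'))/\<surd>2. Since opp \<sigma> is
upper-similar to \<sigma>' iff \<sigma> is upper-similar to opp \<sigma>', and \<sigma> is never upper-similar to both
\<sigma>' and opp \<sigma>', this difference is the (\<sigma>, \<sigma>') entry of \<Delta>/K.\<close>

lemma finite_basis: "finite (basis m)"
  unfolding basis_def using finite_lists_length_eq[of "UNIV :: bool set" m] by simp

lemma op_mult_proj_op_right:
  assumes "y \<in> basis m"
  shows "op_mult m A (proj_op B) x y = (if y \<in> B then A x y else 0)"
proof -
  have "op_mult m A (proj_op B) x y = (\<Sum>z\<in>basis m. if z = y then (if y \<in> B then A x y else 0) else 0)"
    unfolding op_mult_def proj_op_def by (rule sum.cong) auto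
  then show ?thesis
    using assms by (simp add: finite_basis)
qed

lemma op_mult_proj_op_left:
  assumes "x \<in> basis m"
  shows "op_mult m (proj_op B) A x y = (if x \<in> B then A x y else 0)"
proof -
  have "op_mult m (proj_op B) A x y = (\<Sum>z\<in>basis m. if z = x then (if x \<in> B then A x y else 0) else 0)"
    unfolding op_mult_def proj_op_def by (rule sum.cong) auto
  then show ?thesis
    using assms by (simp add: finite_basis)
qed

lemma proj_block_apply:
  assumes "x \<in> basis m" "y \<in> basis m"
  shows "proj_block m B \<alpha> U x y =
    (if x \<in> B \<and> y \<in> B then U (x @ replicate \<alpha> False) (y @ replicate \<alpha> False) else 0)"
  using assms by (simp add: proj_block_def op_mult_proj_op_left op_mult_proj_op_right)

lemma mat_op_apply:
  assumes "finite I" "inj_on bas I" "s \<in> I" "t \<in> I"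
  shows "mat_op bas I M (bas s) (bas t) = M s t"
proof -
  have "mat_op bas I M (bas s) (bas t) =
      (\<Sum>s'\<in>I. if s' = s then (\<Sum>t'\<in>I. if t' = t then M s t else 0) else 0)"
    unfolding mat_op_def
    by (intro sum.cong refl) (use assms in \<open>auto simp: inj_on_eq_iff\<close>)
  then show ?thesis
    using assms by simp
qed

lemma mat_op_apply_outside:
  assumes "x \<notin> bas ` I \<or> y \<notin> bas ` I"
  shows "mat_op bas I M x y = 0"
  unfolding mat_op_def using assms by (auto intro!: sum.neutral)

lemma gate_on_apply:
  assumes "length x = m" "length z = m" "j < m" "\<not> x ! j"
  shows "gate_on m (j + 1) G x z =
    (if z = x then G False False else if z = x[j := True] then G False True else 0)"
proof -
  have "(\<forall>i<m. i \<noteq> j \<longrightarrow> x ! i = z ! i) \<longleftrightarrow> z = x[j := z ! j]"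
    using assms by (auto simp: list_eq_iff_nth_eq nth_list_update)
  moreover have "x[j := False] = x"
    using assms(4) list_update_id[of x j] by simp
  ultimately show ?thesis
    using assms by (cases "z ! j") (auto simp: gate_on_def)
qed

lemma op_mult_gate_on_apply:
  assumes "x \<in> basis m" "j < m" "\<not> x ! j"
  shows "op_mult m (gate_on m (j + 1) G) U x y =
    G False False * U x y + G False True * U (x[j := True]) y"
proof -
  let ?x' = "x[j := True]"
  have flip: "?x' \<noteq> x" "?x' \<in> basis m"
    using assms by (auto simp: basis_def dest: arg_cong[where f = "\<lambda>l. l ! j"])
  have "gate_on m (j + 1) G x z * U z y =
      (if z = x then G False False * U x y else 0) + (if z = ?x' then G False True * U ?x' y else 0)"
    if "z \<in> basis m" for z
    using that assms flip(1) gate_on_apply[of x m z j G] by (simp add: basis_def)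
  then have "op_mult m (gate_on m (j + 1) G) U x y =
      (\<Sum>z\<in>basis m. (if z = x then G False False * U x y else 0)
        + (if z = ?x' then G False True * U ?x' y else 0))"
    unfolding op_mult_def by (rule sum.cong[OF refl])
  then show ?thesis
    using assms flip by (simp add: sum.distrib finite_basis)
qed

lemma HZ_False_False: "HZ False False = 1 / complex_of_real (sqrt 2)"
  by (simp add: HZ_def UNIV_bool hadamard_def pauliZ_def)

lemma HZ_False_True: "HZ False True = - 1 / complex_of_real (sqrt 2)"
  by (simp add: HZ_def UNIV_bool hadamard_def pauliZ_def)

lemma inj_on_xstr: "inj_on (xstr n) (Pow {1..n})"
proof
  fix S T assume S: "S \<in> Pow {1..n}" and T: "T \<in> Pow {1..n}" and eq: "xstr n S = xstr n T"
  have "v \<in> S \<longleftrightarrow> v \<in> T" if "v \<in> {1..n}" for v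
  proof -
    have "xstr n S ! (v - 1) = (v \<in> S)" "xstr n T ! (v - 1) = (v \<in> T)"
      using that by (auto simp: xstr_def simp del: upt_Suc)
    then show ?thesis
      using eq by simp
  qed
  then show "S = T"
    using S T by blast
qed

lemma Xplus_subset_Xpm: "Xplus X k \<subseteq> Xpm X k"
  by (auto simp: Xplus_def Xpm_def)

lemma length_xstr [simp]: "length (xstr n S) = n"
  by (simp add: xstr_def)

lemma length_ket [simp]: "length (ket n \<sigma>) = n + 2"
  by (simp add: ket_def)

lemma ket_in_basis: "ket n \<sigma> \<in> basis (n + 2)"
  by (simp add: basis_def)

lemma ket_opp: "snd \<sigma> \<Longrightarrow> ket n (opp \<sigma>) = (ket n \<sigma>)[n := True]"
  by (simp add: ket_def opp_def list_update_append)

context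
  fixes n :: nat and X :: "nat set set"
  assumes complex: "simplicial_complex n X"
begin

lemma complex_subset_Pow: "X \<subseteq> Pow {1..n}"
  using complex unfolding simplicial_complex_def by blast

lemma finite_Xpm: "finite (Xpm X k)"
proof -
  have "finite (X \<times> (UNIV :: bool set))"
    using complex_subset_Pow by (simp add: finite_subset)
  moreover have "Xpm X k \<subseteq> X \<times> UNIV"
    by (auto simp: Xpm_def Xk_def)
  ultimately show ?thesis
    by (rule finite_subset[rotated])
qed

lemma inj_on_ket: "inj_on (ket n) (Xpm X k)"
proof
  fix \<sigma> \<tau> assume \<sigma>: "\<sigma> \<in> Xpm X k" and \<tau>: "\<tau> \<in> Xpm X k" and eq: "ket n \<sigma> = ket n \<tau>"
  then have "xstr n (fst \<sigma>) = xstr n (fst \<tau>)" "snd \<sigma> = snd \<tau>"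
    by (auto simp: ket_def)
  moreover have "fst \<sigma> \<in> X" "fst \<tau> \<in> X"
    using \<sigma> \<tau> by (auto simp: Xpm_def Xk_def)
  then have "fst \<sigma> \<in> Pow {1..n}" "fst \<tau> \<in> Pow {1..n}"
    using complex_subset_Pow by blast+
  ultimately show "\<sigma> = \<tau>"
    using inj_on_xstr[of n] by (simp add: inj_on_eq_iff prod_eq_iff)
qed

lemma inj_on_ket_S: "inj_on (ket_S n) (Sk X k)"
proof -
  have "inj_on (ket_S n) (Some ` Xpm X k)"
    using inj_on_ket by (auto simp: inj_on_def ket_S_def)
  moreover have "ket_S n None \<notin> ket_S n ` Some ` Xpm X k"
    by (auto simp: ket_S_def ket_def)
  ultimately show ?thesis
    by (simp add: Sk_def)
qed

lemma block_encoding_apply: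
  assumes encoding: "op_eq (n + 2) (proj_block (n + 2) (Pi_pm n X k) \<alpha> U)
      (op_mult (n + 2) (proj_op (Pi_pm n X k))
        (op_mult (n + 2) (mat_op (ket_S n) (Sk X k) M) (proj_op (Pi_pm n X k))))"
    and \<tau>: "\<tau> \<in> Xpm X k" and \<tau>': "\<tau>' \<in> Xpm X k"
  shows "U (ket n \<tau> @ replicate \<alpha> False) (ket n \<tau>' @ replicate \<alpha> False) = M (Some \<tau>) (Some \<tau>')"
proof -
  have "proj_block (n + 2) (Pi_pm n X k) \<alpha> U (ket n \<tau>) (ket n \<tau>') =
      op_mult (n + 2) (proj_op (Pi_pm n X k))
        (op_mult (n + 2) (mat_op (ket_S n) (Sk X k) M) (proj_op (Pi_pm n X k))) (ket n \<tau>) (ket n \<tau>')"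
    using encoding ket_in_basis unfolding op_eq_def by blast
  then have "U (ket n \<tau> @ replicate \<alpha> False) (ket n \<tau>' @ replicate \<alpha> False) =
      mat_op (ket_S n) (Sk X k) M (ket_S n (Some \<tau>)) (ket_S n (Some \<tau>'))"
    using \<tau> \<tau>' ket_in_basis[of n]
    by (simp add: proj_block_apply op_mult_proj_op_left op_mult_proj_op_right Pi_pm_def ket_S_def)
  also have "\<dots> = M (Some \<tau>) (Some \<tau>')"
    using \<tau> \<tau>' finite_Xpm inj_on_ket_S by (intro mat_op_apply) (auto simp: Sk_def)
  finally show ?thesis .
qed

lemma HZ_orientation_block_encoding_apply:
  assumes encoding: "op_eq (n + 2) (proj_block (n + 2) (Pi_pm n X k) \<alpha> U)
      (op_mult (n + 2) (proj_op (Pi_pm n X k))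
        (op_mult (n + 2) (mat_op (ket_S n) (Sk X k) M) (proj_op (Pi_pm n X k))))"
    and \<sigma>: "\<sigma> \<in> Xplus X k" and \<sigma>': "\<sigma>' \<in> Xpm X k"
  shows "op_mult (n + 2 + \<alpha>) (gate_on (n + 2 + \<alpha>) (n + 1) HZ) U
      (ket n \<sigma> @ replicate \<alpha> False) (ket n \<sigma>' @ replicate \<alpha> False) =
    (M (Some \<sigma>) (Some \<sigma>') - M (Some (opp \<sigma>)) (Some \<sigma>')) / sqrt 2"
proof -
  let ?x = "ket n \<sigma> @ replicate \<alpha> False"
  have pos: "snd \<sigma>" and in_Xpm: "\<sigma> \<in> Xpm X k" "opp \<sigma> \<in> Xpm X k"
    using \<sigma> by (auto simp: Xplus_def Xpm_def opp_def)
  have "?x \<in> basis (n + 2 + \<alpha>)" "\<not> ?x ! n"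
    using pos by (auto simp: basis_def ket_def nth_append)
  moreover have "?x[n := True] = ket n (opp \<sigma>) @ replicate \<alpha> False"
    using pos by (simp add: ket_opp list_update_append)
  ultimately show ?thesis
    using op_mult_gate_on_apply[of ?x "n + 2 + \<alpha>" n HZ U]
      block_encoding_apply[OF encoding] in_Xpm \<sigma>'
    by (simp add: HZ_False_False HZ_False_True diff_divide_distrib)
qed

end

lemma sim_up_opp_left_iff: "sim_up X (opp \<sigma>) \<sigma>' \<longleftrightarrow> sim_up X \<sigma> (opp \<sigma>')"
  unfolding sim_up_def induced_def vdiff_def opp_def by auto

lemma not_sim_up_and_opp: "\<not> (sim_up X \<sigma> \<sigma>' \<and> sim_up X \<sigma> (opp \<sigma>'))"
  unfolding sim_up_def induced_def vdiff_def opp_def by auto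

lemma P_up_sub_P_up_opp:
  assumes "snd \<sigma>" "snd \<sigma>'"
  shows "P_up n X w k (Some \<sigma>) (Some \<sigma>') - P_up n X w k (Some (opp \<sigma>)) (Some \<sigma>') =
    Delta_up X w \<sigma> \<sigma>' / K_up n X w k"
proof -
  have "vdiff (opp \<sigma>) \<sigma>' = vdiff \<sigma> \<sigma>'" "vdiff \<sigma>' (opp \<sigma>) = vdiff \<sigma>' \<sigma>"
    by (auto simp: vdiff_def opp_def)
  moreover have "opp \<sigma> \<noteq> \<sigma>'" "\<sigma> = \<sigma>' \<Longrightarrow> \<not> sim_up X (opp \<sigma>) \<sigma>'"
    using assms by (auto simp: sim_up_def opp_def)
  ultimately show ?thesis
    using sim_up_opp_left_iff[of X \<sigma> \<sigma>'] not_sim_up_and_opp[of X \<sigma> \<sigma>']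
    by (auto simp: P_up_def Delta_up_def diff_divide_distrib)
qed

theorem proposition3p4:
  fixes n k \<alpha> :: nat and X :: "nat set set" and w :: "nat \<Rightarrow> real" and U :: qop
  assumes "simplicial_complex n X"
    and "\<forall>v\<in>{1..n}. w v > 0"
    and "unitary_op (n + 2 + \<alpha>) U"
    and "op_eq (n + 2) (proj_block (n + 2) (Pi_pm n X k) \<alpha> U)
           (op_mult (n + 2) (proj_op (Pi_pm n X k))
              (op_mult (n + 2) (mat_op (ket_S n) (Sk X k) (\<lambda>a b. complex_of_real (P_up n X w k a b)))
                 (proj_op (Pi_pm n X k))))"
  shows "op_eq (n + 2)
           (proj_block (n + 2) (Pi_k n X k) \<alpha> (op_mult (n + 2 + \<alpha>) (gate_on (n + 2 + \<alpha>) (n + 1) HZ) U))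
           (mat_op (ket n) (Xplus X k)
              (\<lambda>\<sigma> \<sigma>'. complex_of_real (Delta_up X w \<sigma> \<sigma>' / (K_up n X w k * sqrt 2))))"
proof -
  let ?V = "op_mult (n + 2 + \<alpha>) (gate_on (n + 2 + \<alpha>) (n + 1) HZ) U"
  let ?D = "\<lambda>\<sigma> \<sigma>'. complex_of_real (Delta_up X w \<sigma> \<sigma>' / (K_up n X w k * sqrt 2))"
  have "proj_block (n + 2) (Pi_k n X k) \<alpha> ?V x y = mat_op (ket n) (Xplus X k) ?D x y"
    if x: "x \<in> basis (n + 2)" and y: "y \<in> basis (n + 2)" for x y
  proof (cases "x \<in> Pi_k n X k \<and> y \<in> Pi_k n X k")
    case True
    then obtain \<sigma> \<sigma>' where \<sigma>: "\<sigma> \<in> Xplus X k" "\<sigma>' \<in> Xplus X k" and xy: "x = ket n \<sigma>" "y = ket n \<sigma>'"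
      by (auto simp: Pi_k_def)
    have "proj_block (n + 2) (Pi_k n X k) \<alpha> ?V x y =
        ?V (ket n \<sigma> @ replicate \<alpha> False) (ket n \<sigma>' @ replicate \<alpha> False)"
      using True x y by (simp add: proj_block_apply xy)
    also have "\<dots> = (complex_of_real (P_up n X w k (Some \<sigma>) (Some \<sigma>'))
        - complex_of_real (P_up n X w k (Some (opp \<sigma>)) (Some \<sigma>'))) / sqrt 2"
      using \<sigma> Xplus_subset_Xpm by (blast intro: HZ_orientation_block_encoding_apply[OF assms(1,4)])
    also have "\<dots> = complex_of_real
        ((P_up n X w k (Some \<sigma>) (Some \<sigma>') - P_up n X w k (Some (opp \<sigma>)) (Some \<sigma>')) / sqrt 2)"
      by simp
    also have "\<dots> = ?D \<sigma> \<sigma>'"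
      using \<sigma> by (subst P_up_sub_P_up_opp) (auto simp: Xplus_def)
    also have "\<dots> = mat_op (ket n) (Xplus X k) ?D x y"
      unfolding xy using \<sigma>
      by (intro mat_op_apply[symmetric] finite_subset[OF Xplus_subset_Xpm finite_Xpm[OF assms(1)]]
          inj_on_subset[OF inj_on_ket[OF assms(1)] Xplus_subset_Xpm])
    finally show ?thesis .
  next
    case False
    then show ?thesis
      using x y by (auto simp: proj_block_apply Pi_k_def intro: mat_op_apply_outside)
  qed
  then show ?thesis
    unfolding op_eq_def by blast
qed

end
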